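(* For every ordinal $\alpha$: if $(T_\alpha,P_\alpha)$ is consistent, then it is sound, i.e. for every $\mathcal L$-sentence $\varphi$, either $(\mathbb N,T_\alpha,P_\alpha)\not\models_{SK}\varphi\vee\neg\varphi$ or $(\mathbb N,T_\alpha,P_\alpha)\not\models_{SK}\mathscr P(\varphi)$.
   Context: Language. Let $\mathcal L_{\mathbb N}$ be the language of first-order Peano arithmetic and $\mathcal L=\mathcal L_{\mathbb N}\cup\{\mathrm T,\mathrm P\}$ with unary predicates $\mathrm T,\mathrm P$. $\mathcal L$-formulas are in Tait style: literals are $s=t$, $s\neq t$, $\mathrm Tt$, $\neg\mathrm Tt$, $\mathrm Pt$, $\neg\mathrm Pt$; formulas are built from literals by $\wedge,\vee,\forall,\exists$; negation of an arbitrary formula is defined by De Morgan dualities with $\neg\neg\varphi:=\varphi$. A standard Gödel numbering is fixed; $\#e$ is the code of $e$, $\ulcorner e\urcorner$ the numeral of $\#e$, $\mathrm{val}(t)$ the value of a closed term $t$, $\dot\neg$ the primitive recursive function with $\dot\neg(\#\varphi)=\#\neg\varphi$; $\mathrm T\varphi,\mathrm P\varphi$ abbreviate $\mathrm T\ulcorner\varphi\urcorner,\mathrm P\ulcorner\varphi\urcorner$. Semantics. A partial model is $(\mathbb N,T,P)$ with $\mathbb N$ the standard model and $T=(T^+,T^-)$, $P=(P^+,P^-)$ pairs of subsets of $\omega$. Strong Kleene satisfaction $\models_{SK}$: arithmetic literals evaluated in $\mathbb N$; $\mathrm Tt$ satisfied iff $\mathrm{val}(t)\in T^+$, $\neg\mathrm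 Tt$ iff $\mathrm{val}(t)\in T^-$, likewise for $\mathrm P$ with $P^\pm$; conjunction iff both, disjunction iff at least one, $\forall x\varphi(x)$ iff all numeral instances, $\exists x\varphi(x)$ iff some numeral instance. $(T,P)$ is consistent iff $T^+\cap T^-=\emptyset$ and $P^+\cap P^-=\emptyset$. Base paradoxicality. $\mathrm{PA}[\mathrm{SK}]$ is the two-sided sequent calculus for Strong Kleene logic with identity in $\mathcal L$ (initial sequents $\varphi\Rightarrow\varphi$, cut, weakening, the rule from $\Gamma\Rightarrow\Delta,\varphi$ infer $\neg\varphi,\Gamma\Rightarrow\Delta$, usual rules for $\wedge,\vee,\forall,\exists$, reflexivity $\Rightarrow t=t$, replacement from $\Gamma\Rightarrow\Delta,\varphi(t)$ infer $\Gamma\Rightarrow\Delta,s\neq t,\varphi(s)$) plus the initial sequents of Peano arithmetic and the induction rule for all $\mathcal L$-formulas. A sentence $\varphi$ is base paradoxical iff $\mathrm{PA}[\mathrm{SK}]$ derives $\varphi\Leftrightarrow\neg\mathrm T\varphi$ and $\neg\varphi\Leftrightarrow\mathrm T\varphi$ ($\Leftrightarrow$ meaning both sequents). $B(x)$ is an $\mathcal L_{\mathbb N}$-formula defining in $\mathbb N$ the set of codes of base paradoxical sentences, and $\Pi(x):=B(x)\vee B(\dot\neg x)$. Jump and sequence. Let $\mathscr P(x)$ be the $\mathcal L$-formula which is the disjunction of: (1) $x$ codes a sentence and $\Pi(x)$; (2) $x$ codes a sentence $\mathrm Tt$ ($t$ a closed term) and $\mathrm P(\mathrm{val}(t))$;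 (3) $x$ codes a sentence $\neg\mathrm Tt$ and $\mathrm P(\mathrm{val}(t))$; (4) $x$ codes a sentence $\psi\wedge\theta$ and $(\mathrm P\psi\wedge\mathrm P\theta)\vee(\mathrm T\psi\wedge\mathrm P\theta)\vee(\mathrm T\theta\wedge\mathrm P\psi)$; (5) $x$ codes a sentence $\psi\vee\theta$ and $(\mathrm P\psi\wedge\mathrm P\theta)\vee(\neg\mathrm T\psi\wedge\mathrm P\theta)\vee(\neg\mathrm T\theta\wedge\mathrm P\psi)$; (6) $x$ codes a sentence $\forall v\psi$ and $\exists y\,\mathrm P\psi(\dot y)\wedge\forall y(\mathrm P\psi(\dot y)\vee\mathrm T\psi(\dot y))$; (7) $x$ codes a sentence $\exists v\psi$ and $\exists y\,\mathrm P\psi(\dot y)\wedge\forall y(\mathrm P\psi(\dot y)\vee\neg\mathrm T\psi(\dot y))$; here $\psi(\dot y)$ is the code of the result of substituting the numeral of $y$ for $v$. Write $\mathscr P(\varphi)$ for $\mathscr P(\ulcorner\varphi\urcorner)$. Define $\Gamma_{\mathscr{TP}}(T,P)=\big((\{\#\varphi:(\mathbb N,T,P)\models_{SK}\varphi\},\{\#\varphi:(\mathbb N,T,P)\models_{SK}\neg\varphi\}),(\{\#\varphi:(\mathbb N,T,P)\models_{SK}\mathscr P(\varphi)\},\{\#\varphi:(\mathbb N,T,P)\models_{SK}\varphi\vee\neg\varphi\})\big)$, $\varphi$ ranging over $\mathcal L$-sentences. Define $(T_0,P_0)=((\emptyset,\emptyset),(\emptyset,\emptyset))$, $(T_{\beta+1},P_{\beta+1})=\Gamma_{\mathscr{TP}}(T_\beta,P_\beta)$,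 $(T_\lambda,P_\lambda)=\bigcup_{\beta<\lambda}(T_\beta,P_\beta)$ (componentwise union) for limit $\lambda$. *)

theory Defs
  imports Main "HOL-Library.Nat_Bijection"
begin

section \<open>Syntax of L = L_N + {T, P} in Tait style\<close>

datatype tm = Var nat | Zero | Sc tm | Plus tm tm | Times tm tm

datatype fm =
    Eq tm tm | Neq tm tm
  | Tr tm | NTr tm
  | Pr tm | NPr tm
  | And fm fm | Or fm fm
  | All nat fm | Ex nat fm

primrec tvars :: "tm \<Rightarrow> nat set" where
  "tvars (Var n) = {n}"
| "tvars Zero = {}"
| "tvars (Sc t) = tvars t"
| "tvars (Plus s t) = tvars s \<union> tvars t"
| "tvars (Times s t) = tvars s \<union> tvars t"

primrec fv :: "fm \<Rightarrow> nat set" where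
  "fv (Eq s t) = tvars s \<union> tvars t"
| "fv (Neq s t) = tvars s \<union> tvars t"
| "fv (Tr t) = tvars t"
| "fv (NTr t) = tvars t"
| "fv (Pr t) = tvars t"
| "fv (NPr t) = tvars t"
| "fv (And a b) = fv a \<union> fv b"
| "fv (Or a b) = fv a \<union> fv b"
| "fv (All x a) = fv a - {x}"
| "fv (Ex x a) = fv a - {x}"

definition sentence :: "fm \<Rightarrow> bool" where
  "sentence \<phi> \<longleftrightarrow> fv \<phi> = {}"

definition fvs :: "fm set \<Rightarrow> nat set" where
  "fvs \<Gamma> = (\<Union>\<phi>\<in>\<Gamma>. fv \<phi>)"

primrec neg :: "fm \<Rightarrow> fm" where
  "neg (Eq s t) = Neq s t"
| "neg (Neq s t) = Eq s t"
| "neg (Tr t) = NTr t"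
| "neg (NTr t) = Tr t"
| "neg (Pr t) = NPr t"
| "neg (NPr t) = Pr t"
| "neg (And a b) = Or (neg a) (neg b)"
| "neg (Or a b) = And (neg a) (neg b)"
| "neg (All x a) = Ex x (neg a)"
| "neg (Ex x a) = All x (neg a)"

primrec tsubst :: "tm \<Rightarrow> nat \<Rightarrow> tm \<Rightarrow> tm" where
  "tsubst (Var n) x u = (if n = x then u else Var n)"
| "tsubst Zero x u = Zero"
| "tsubst (Sc t) x u = Sc (tsubst t x u)"
| "tsubst (Plus s t) x u = Plus (tsubst s x u) (tsubst t x u)"
| "tsubst (Times s t) x u = Times (tsubst s x u) (tsubst t x u)"

primrec subst :: "fm \<Rightarrow> nat \<Rightarrow> tm \<Rightarrow> fm" where
  "subst (Eq s t) x u = Eq (tsubst s x u) (tsubst t x u)"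
| "subst (Neq s t) x u = Neq (tsubst s x u) (tsubst t x u)"
| "subst (Tr t) x u = Tr (tsubst t x u)"
| "subst (NTr t) x u = NTr (tsubst t x u)"
| "subst (Pr t) x u = Pr (tsubst t x u)"
| "subst (NPr t) x u = NPr (tsubst t x u)"
| "subst (And a b) x u = And (subst a x u) (subst b x u)"
| "subst (Or a b) x u = Or (subst a x u) (subst b x u)"
| "subst (All y a) x u = (if y = x then All y a else All y (subst a x u))"
| "subst (Ex y a) x u = (if y = x then Ex y a else Ex y (subst a x u))"

primrec freefor :: "tm \<Rightarrow> nat \<Rightarrow> fm \<Rightarrow> bool" where
  "freefor u x (Eq s t) = True"
| "freefor u x (Neq s t) = True"
| "freefor u x (Tr t) = True"
| "freefor u x (NTr t) = True"
| "freefor u x (Pr t) = True"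
| "freefor u x (NPr t) = True"
| "freefor u x (And a b) = (freefor u x a \<and> freefor u x b)"
| "freefor u x (Or a b) = (freefor u x a \<and> freefor u x b)"
| "freefor u x (All y a) = (x \<notin> fv (All y a) \<or> (y \<notin> tvars u \<and> freefor u x a))"
| "freefor u x (Ex y a) = (x \<notin> fv (Ex y a) \<or> (y \<notin> tvars u \<and> freefor u x a))"

primrec num :: "nat \<Rightarrow> tm" where
  "num 0 = Zero"
| "num (Suc n) = Sc (num n)"

primrec tcode :: "tm \<Rightarrow> nat" where
  "tcode (Var n) = prod_encode (0, n)"
| "tcode Zero = prod_encode (1, 0)"
| "tcode (Sc t) = prod_encode (2, tcode t)"
| "tcode (Plus s t) = prod_encode (3, prod_encode (tcode s, tcode t))"
| "tcode (Times s t) = prod_encode (4, prod_encode (tcode s, tcode t))"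

primrec code :: "fm \<Rightarrow> nat" where
  "code (Eq s t) = prod_encode (0, prod_encode (tcode s, tcode t))"
| "code (Neq s t) = prod_encode (1, prod_encode (tcode s, tcode t))"
| "code (Tr t) = prod_encode (2, tcode t)"
| "code (NTr t) = prod_encode (3, tcode t)"
| "code (Pr t) = prod_encode (4, tcode t)"
| "code (NPr t) = prod_encode (5, tcode t)"
| "code (And a b) = prod_encode (6, prod_encode (code a, code b))"
| "code (Or a b) = prod_encode (7, prod_encode (code a, code b))"
| "code (All x a) = prod_encode (8, prod_encode (x, code a))"
| "code (Ex x a) = prod_encode (9, prod_encode (x, code a))"

abbreviation quote :: "fm \<Rightarrow> tm" where
  "quote \<phi> \<equiv> num (code \<phi>)"

section \<open>Strong Kleene semantics over the standard model\<close>

primrec tval :: "(nat \<Rightarrow> nat) \<Rightarrow> tm \<Rightarrow> nat" where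
  "tval e (Var n) = e n"
| "tval e Zero = 0"
| "tval e (Sc t) = Suc (tval e t)"
| "tval e (Plus s t) = tval e s + tval e t"
| "tval e (Times s t) = tval e s * tval e t"

text \<open>A pair (X+, X-) of subsets of omega interprets a predicate partially.\<close>
type_synonym pinterp = "nat set \<times> nat set"

primrec satSK :: "pinterp \<Rightarrow> pinterp \<Rightarrow> (nat \<Rightarrow> nat) \<Rightarrow> fm \<Rightarrow> bool" where
  "satSK T P e (Eq s t) = (tval e s = tval e t)"
| "satSK T P e (Neq s t) = (tval e s \<noteq> tval e t)"
| "satSK T P e (Tr t) = (tval e t \<in> fst T)"
| "satSK T P e (NTr t) = (tval e t \<in> snd T)"
| "satSK T P e (Pr t) = (tval e t \<in> fst P)"
| "satSK T P e (NPr t) = (tval e t \<in> snd P)"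
| "satSK T P e (And a b) = (satSK T P e a \<and> satSK T P e b)"
| "satSK T P e (Or a b) = (satSK T P e a \<or> satSK T P e b)"
| "satSK T P e (All x a) = (\<forall>n. satSK T P (e(x := n)) a)"
| "satSK T P e (Ex x a) = (\<exists>n. satSK T P (e(x := n)) a)"

text \<open>(N,T,P) |=_SK phi, for sentences phi (the assignment is irrelevant).\<close>
definition modelsSK :: "pinterp \<Rightarrow> pinterp \<Rightarrow> fm \<Rightarrow> bool" where
  "modelsSK T P \<phi> \<longleftrightarrow> satSK T P (\<lambda>_. 0) \<phi>"

inductive PASK :: "fm set \<Rightarrow> fm set \<Rightarrow> bool" where
  init: "PASK {\<phi>} {\<phi>}"
| weak: "PASK \<Gamma> \<Delta> \<Longrightarrow> finite \<Gamma>' \<Longrightarrow> finite \<Delta>' \<Longrightarrow> PASK (\<Gamma> \<union> \<Gamma>') (\<Delta> \<union> \<Delta>')"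
| cut: "PASK \<Gamma> (insert \<phi> \<Delta>) \<Longrightarrow> PASK (insert \<phi> \<Gamma>) \<Delta> \<Longrightarrow> PASK \<Gamma> \<Delta>"
| negL: "PASK \<Gamma> (insert \<phi> \<Delta>) \<Longrightarrow> PASK (insert (neg \<phi>) \<Gamma>) \<Delta>"
| andL: "PASK (insert \<phi> (insert \<psi> \<Gamma>)) \<Delta> \<Longrightarrow> PASK (insert (And \<phi> \<psi>) \<Gamma>) \<Delta>"
| andR: "PASK \<Gamma> (insert \<phi> \<Delta>) \<Longrightarrow> PASK \<Gamma> (insert \<psi> \<Delta>) \<Longrightarrow> PASK \<Gamma> (insert (And \<phi> \<psi>) \<Delta>)"
| orL: "PASK (insert \<phi> \<Gamma>) \<Delta> \<Longrightarrow> PASK (insert \<psi> \<Gamma>) \<Delta> \<Longrightarrow> PASK (insert (Or \<phi> \<psi>) \<Gamma>) \<Delta>"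
| orR: "PASK \<Gamma> (insert \<phi> (insert \<psi> \<Delta>)) \<Longrightarrow> PASK \<Gamma> (insert (Or \<phi> \<psi>) \<Delta>)"
| allL: "freefor t x \<phi> \<Longrightarrow> PASK (insert (subst \<phi> x t) \<Gamma>) \<Delta> \<Longrightarrow> PASK (insert (All x \<phi>) \<Gamma>) \<Delta>"
| allR: "freefor (Var y) x \<phi> \<Longrightarrow> y \<notin> fvs \<Gamma> \<union> fvs \<Delta> \<union> fv (All x \<phi>) \<Longrightarrow>
         PASK \<Gamma> (insert (subst \<phi> x (Var y)) \<Delta>) \<Longrightarrow> PASK \<Gamma> (insert (All x \<phi>) \<Delta>)"
| exL: "freefor (Var y) x \<phi> \<Longrightarrow> y \<notin> fvs \<Gamma> \<union> fvs \<Delta> \<union> fv (Ex x \<phi>) \<Longrightarrow>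
         PASK (insert (subst \<phi> x (Var y)) \<Gamma>) \<Delta> \<Longrightarrow> PASK (insert (Ex x \<phi>) \<Gamma>) \<Delta>"
| exR: "freefor t x \<phi> \<Longrightarrow> PASK \<Gamma> (insert (subst \<phi> x t) \<Delta>) \<Longrightarrow> PASK \<Gamma> (insert (Ex x \<phi>) \<Delta>)"
| refl: "PASK {} {Eq t t}"
| repl: "freefor s x \<phi> \<Longrightarrow> freefor t x \<phi> \<Longrightarrow> PASK \<Gamma> (insert (subst \<phi> x t) \<Delta>) \<Longrightarrow>
         PASK \<Gamma> (insert (Neq s t) (insert (subst \<phi> x s) \<Delta>))"
| pa_succ_ne_zero: "PASK {} {Neq (Sc s) Zero}"
| pa_succ_inj: "PASK {Eq (Sc s) (Sc t)} {Eq s t}"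
| pa_plus_zero: "PASK {} {Eq (Plus s Zero) s}"
| pa_plus_succ: "PASK {} {Eq (Plus s (Sc t)) (Sc (Plus s t))}"
| pa_times_zero: "PASK {} {Eq (Times s Zero) Zero}"
| pa_times_succ: "PASK {} {Eq (Times s (Sc t)) (Plus (Times s t) s)}"
| pa_eq_lem: "PASK {} {Eq s t, Neq s t}"
| ind: "x \<notin> fvs \<Gamma> \<union> fvs \<Delta> \<Longrightarrow> freefor (Sc (Var x)) x \<phi> \<Longrightarrow> freefor t x \<phi> \<Longrightarrow>
        PASK (insert \<phi> \<Gamma>) (insert (subst \<phi> x (Sc (Var x))) \<Delta>) \<Longrightarrow>
        PASK (insert (subst \<phi> x Zero) \<Gamma>) (insert (subst \<phi> x t) \<Delta>)"

definition PASK_iff :: "fm \<Rightarrow> fm \<Rightarrow> bool" where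
  "PASK_iff \<phi> \<psi> \<longleftrightarrow> PASK {\<phi>} {\<psi>} \<and> PASK {\<psi>} {\<phi>}"

definition base_paradoxical :: "fm \<Rightarrow> bool" where
  "base_paradoxical \<phi> \<longleftrightarrow> sentence \<phi> \<and>
     PASK_iff \<phi> (NTr (quote \<phi>)) \<and> PASK_iff (neg \<phi>) (Tr (quote \<phi>))"

text \<open>The set of codes defined in N by the arithmetical formula B(x).\<close>
definition Bset :: "nat set" where
  "Bset = {code \<phi> | \<phi>. base_paradoxical \<phi>}"

text \<open>Arithmetical parts of calP are evaluated in N (SK agrees with classical truth on
  L_N); the atomic P/T parts are evaluated via the partial extensions. Since the Goedel
  numbering is injective, "x codes psi /\ theta" means the sentence is literally And psi theta.\<close>
definition calP_sat :: "pinterp \<Rightarrow> pinterp \<Rightarrow> fm \<Rightarrow> bool" where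
  "calP_sat T P \<phi> \<longleftrightarrow>
     (sentence \<phi> \<and> (code \<phi> \<in> Bset \<or> code (neg \<phi>) \<in> Bset)) \<or>
     (\<exists>t. sentence \<phi> \<and> \<phi> = Tr t \<and> tval (\<lambda>_. 0) t \<in> fst P) \<or>
     (\<exists>t. sentence \<phi> \<and> \<phi> = NTr t \<and> tval (\<lambda>_. 0) t \<in> fst P) \<or>
     (\<exists>\<psi> \<theta>. sentence \<phi> \<and> \<phi> = And \<psi> \<theta> \<and>
        ((code \<psi> \<in> fst P \<and> code \<theta> \<in> fst P) \<or> (code \<psi> \<in> fst T \<and> code \<theta> \<in> fst P)
         \<or> (code \<theta> \<in> fst T \<and> code \<psi> \<in> fst P))) \<or>
     (\<exists>\<psi> \<theta>. sentence \<phi> \<and> \<phi> = Or \<psi> \<theta> \<and>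
        ((code \<psi> \<in> fst P \<and> code \<theta> \<in> fst P) \<or> (code \<psi> \<in> snd T \<and> code \<theta> \<in> fst P)
         \<or> (code \<theta> \<in> snd T \<and> code \<psi> \<in> fst P))) \<or>
     (\<exists>v \<psi>. sentence \<phi> \<and> \<phi> = All v \<psi> \<and>
        (\<exists>y. code (subst \<psi> v (num y)) \<in> fst P) \<and>
        (\<forall>y. code (subst \<psi> v (num y)) \<in> fst P \<or> code (subst \<psi> v (num y)) \<in> fst T)) \<or>
     (\<exists>v \<psi>. sentence \<phi> \<and> \<phi> = Ex v \<psi> \<and>
        (\<exists>y. code (subst \<psi> v (num y)) \<in> fst P) \<and>
        (\<forall>y. code (subst \<psi> v (num y)) \<in> fst P \<or> code (subst \<psi> v (num y)) \<in> snd T))"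

type_synonym state = "pinterp \<times> pinterp"

definition jumpTP :: "state \<Rightarrow> state" where
  "jumpTP S = (let T = fst S; P = snd S in
     (({code \<phi> | \<phi>. sentence \<phi> \<and> modelsSK T P \<phi>},
       {code \<phi> | \<phi>. sentence \<phi> \<and> modelsSK T P (neg \<phi>)}),
      ({code \<phi> | \<phi>. sentence \<phi> \<and> calP_sat T P \<phi>},
       {code \<phi> | \<phi>. sentence \<phi> \<and> modelsSK T P (Or \<phi> (neg \<phi>))})))"

definition state_Union :: "state set \<Rightarrow> state" where
  "state_Union A = (((\<Union>S\<in>A. fst (fst S)), (\<Union>S\<in>A. snd (fst S))),
                    ((\<Union>S\<in>A. fst (snd S)), (\<Union>S\<in>A. snd (snd S))))"

definition empty_state :: state where
  "empty_state = (({}, {}), ({}, {}))"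

text \<open>Ordinals are represented as elements of well-ordered types: a has no predecessor
  (stage 0), a largest predecessor b (successor stage b+1), or is a limit.\<close>
definition stage_step :: "('a::wellorder \<Rightarrow> state) \<Rightarrow> 'a \<Rightarrow> state" where
  "stage_step f a =
     (if \<not> (\<exists>b. b < a) then empty_state
      else if (\<exists>b. b < a \<and> (\<forall>c. c < a \<longrightarrow> c \<le> b)) then jumpTP (f (GREATEST b. b < a))
      else state_Union (f ` {b. b < a}))"

definition stage :: "'a::wellorder \<Rightarrow> state" where
  "stage = wfrec {(x, y). x < y} stage_step"

definition consistent :: "state \<Rightarrow> bool" where
  "consistent S \<longleftrightarrow> fst (fst S) \<inter> snd (fst S) = {} \<and> fst (snd S) \<inter> snd (snd S) = {}"

end

theory Submission
  imports Defs "HOL-Library.Product_Order"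
begin

text \<open>Every stage \<open>S\<close> lies below its own jump, so each code in \<open>T\<^sup>+\<close>, \<open>T\<^sup>-\<close>, \<open>P\<^sup>+\<close>
  names a sentence that is true, false, resp. satisfies \<open>\<P>\<close> in \<open>S\<close> itself. If moreover \<open>S\<close> is
  consistent and \<open>P\<^sup>+\<close> is disjoint from \<open>T\<^sup>+ \<union> T\<^sup>-\<close>, no sentence satisfying \<open>\<P>\<close> is true
  or false in \<open>S\<close>, by induction on the sentence: a base paradoxical sentence is neither, since
  consistent partial models satisfy every sequent derivable in PA[SK], and every compositional
  clause of \<open>\<P>\<close> requires some component to lie in \<open>P\<^sup>+\<close>, hence to be indeterminate by
  induction, and any other component it mentions has the truth value that leaves the compound
  indeterminate too. This soundness of \<open>S\<close> is exactly the disjointness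
  of \<open>P\<^sup>+\<close> from \<open>T\<^sup>+ \<union> T\<^sup>-\<close> in the jump of \<open>S\<close>, so disjointness passes to successor stages,
  and to limit stages because the stages increase.\<close>

lemma tval_num [simp]: "tval e (num n) = n"
  by (induction n) auto

lemma tvars_num [simp]: "tvars (num n) = {}"
  by (induction n) auto

lemma neg_neg [simp]: "neg (neg \<phi>) = \<phi>"
  by (induction \<phi>) auto

lemma neg_subst: "neg (subst \<phi> x u) = subst (neg \<phi>) x u"
  by (induction \<phi>) auto

lemma size_subst [simp]: "size (subst \<phi> x u) = size \<phi>"
  by (induction \<phi>) auto

lemma inj_tcode: "inj tcode"
proof (rule injI)
  show "tcode s = tcode t \<Longrightarrow> s = t" for s t
    by (induction s arbitrary: t; case_tac t) auto
qed

lemma inj_code: "inj code"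
proof (rule injI)
  show "code \<phi> = code \<psi> \<Longrightarrow> \<phi> = \<psi>" for \<phi> \<psi>
    by (induction \<phi> arbitrary: \<psi>; case_tac \<psi>) (auto dest: injD[OF inj_tcode])
qed

lemma freefor_closed: "tvars u = {} \<Longrightarrow> freefor u x \<phi>"
  by (induction \<phi>) auto

lemma tsubst_notin: "x \<notin> tvars s \<Longrightarrow> tsubst s x u = s"
  by (induction s) auto

lemma subst_notin: "x \<notin> fv \<phi> \<Longrightarrow> subst \<phi> x u = \<phi>"
  by (induction \<phi>) (auto simp: tsubst_notin)

lemma tval_coinc: "\<forall>v\<in>tvars s. e v = e' v \<Longrightarrow> tval e s = tval e' s"
  by (induction s) auto

lemma sat_coinc:
  "\<forall>v\<in>fv \<phi>. e v = e' v \<Longrightarrow> satSK T P e \<phi> = satSK T P e' \<phi>"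
proof (induction \<phi> arbitrary: e e')
  case (All x a)
  then have "satSK T P (e(x := n)) a = satSK T P (e'(x := n)) a" for n
    by (intro All.IH) auto
  then show ?case
    by simp
next
  case (Ex x a)
  then have "satSK T P (e(x := n)) a = satSK T P (e'(x := n)) a" for n
    by (intro Ex.IH) auto
  then show ?case
    by simp
qed (auto simp: ball_Un dest!: tval_coinc)

lemma sat_fun_upd_fresh: "x \<notin> fv \<phi> \<Longrightarrow> satSK T P (e(x := n)) \<phi> = satSK T P e \<phi>"
  by (rule sat_coinc) auto

lemma tval_tsubst: "tval e (tsubst s x u) = tval (e(x := tval e u)) s"
  by (induction s) auto

lemma sat_subst_below_binder:
  assumes IH: "\<And>e. freefor u x a \<Longrightarrow> satSK T P e (subst a x u) = satSK T P (e(x := tval e u)) a"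
    and "y \<noteq> x" and "x \<notin> fv a - {y} \<or> y \<notin> tvars u \<and> freefor u x a"
  shows "satSK T P (e(y := n)) (subst a x u) = satSK T P (e(x := tval e u, y := n)) a"
  using assms(3)
proof
  assume "x \<notin> fv a - {y}"
  then show ?thesis
    using \<open>y \<noteq> x\<close> by (simp add: subst_notin sat_fun_upd_fresh fun_upd_twist)
next
  assume fresh: "y \<notin> tvars u \<and> freefor u x a"
  then have "tval (e(y := n)) u = tval e u"
    by (intro tval_coinc) auto
  then show ?thesis
    using IH fresh \<open>y \<noteq> x\<close> by (simp add: fun_upd_twist)
qed

lemma sat_subst:
  "freefor u x \<phi> \<Longrightarrow> satSK T P e (subst \<phi> x u) = satSK T P (e(x := tval e u)) \<phi>"
proof (induction \<phi> arbitrary: e)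
  case (All y a)
  show ?case
  proof (cases "y = x")
    case False
    then have "satSK T P (e(y := n)) (subst a x u) = satSK T P (e(x := tval e u, y := n)) a" for n
      using All.prems by (intro sat_subst_below_binder[OF All.IH]) auto
    then show ?thesis
      using False by (simp del: fun_upd_apply)
  qed (simp del: fun_upd_apply)
next
  case (Ex y a)
  show ?case
  proof (cases "y = x")
    case False
    then have "satSK T P (e(y := n)) (subst a x u) = satSK T P (e(x := tval e u, y := n)) a" for n
      using Ex.prems by (intro sat_subst_below_binder[OF Ex.IH]) auto
    then show ?thesis
      using False by (simp del: fun_upd_apply)
  qed (simp del: fun_upd_apply)
qed (simp_all add: tval_tsubst)

lemma sat_consistent:
  "consistent (T, P) \<Longrightarrow> \<not> (satSK T P e \<phi> \<and> satSK T P e (neg \<phi>))"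
  by (induction \<phi> arbitrary: e) (auto simp: consistent_def)

lemma sat_mono: "satSK T P e \<phi> \<Longrightarrow> T \<le> T' \<Longrightarrow> P \<le> P' \<Longrightarrow> satSK T' P' e \<phi>"
  by (induction \<phi> arbitrary: e) (auto simp: less_eq_prod_def)

lemma modelsSK_simps:
  "modelsSK T P (Tr t) \<longleftrightarrow> tval (\<lambda>_. 0) t \<in> fst T"
  "modelsSK T P (NTr t) \<longleftrightarrow> tval (\<lambda>_. 0) t \<in> snd T"
  "modelsSK T P (And \<psi> \<theta>) \<longleftrightarrow> modelsSK T P \<psi> \<and> modelsSK T P \<theta>"
  "modelsSK T P (Or \<psi> \<theta>) \<longleftrightarrow> modelsSK T P \<psi> \<or> modelsSK T P \<theta>"
  "modelsSK T P (All v \<psi>) \<longleftrightarrow> (\<forall>n. modelsSK T P (subst \<psi> v (num n)))"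
  "modelsSK T P (Ex v \<psi>) \<longleftrightarrow> (\<exists>n. modelsSK T P (subst \<psi> v (num n)))"
  by (simp_all add: modelsSK_def sat_subst freefor_closed)

lemma sat_fun_upd_fresh_fvs:
  "y \<notin> fvs \<Gamma> \<Longrightarrow> \<phi> \<in> \<Gamma> \<Longrightarrow> satSK T P (e(y := n)) \<phi> = satSK T P e \<phi>"
  by (metis UN_I fvs_def sat_fun_upd_fresh)

lemma PASK_sound:
  assumes "PASK \<Gamma> \<Delta>" and "consistent (T, P)" and "\<forall>\<phi>\<in>\<Gamma>. satSK T P e \<phi>"
  shows "\<exists>\<psi>\<in>\<Delta>. satSK T P e \<psi>"
  using assms(1,3)
proof (induction arbitrary: e rule: PASK.induct)
  case (negL \<Gamma> \<phi> \<Delta>)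
  then show ?case
    using sat_consistent[OF assms(2)] by blast
next
  case (allL t x \<phi> \<Gamma> \<Delta>)
  then show ?case
    by (simp add: sat_subst)
next
  case (exR t x \<phi> \<Gamma> \<Delta>)
  then show ?case
    by (auto simp: sat_subst)
next
  case (allR y x \<phi> \<Gamma> \<Delta>)
  show ?case
  proof (rule ccontr)
    assume none: "\<not> (\<exists>\<psi>\<in>insert (All x \<phi>) \<Delta>. satSK T P e \<psi>)"
    have "satSK T P (e(x := n)) \<phi>" for n
    proof -
      have "\<forall>\<chi>\<in>\<Gamma>. satSK T P (e(y := n)) \<chi>" "\<not> (\<exists>\<psi>\<in>\<Delta>. satSK T P (e(y := n)) \<psi>)"
        using allR.prems none allR.hyps(2) by (auto simp: sat_fun_upd_fresh_fvs)
      then have "satSK T P (e(y := n)) (subst \<phi> x (Var y))"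
        using allR.IH by blast
      moreover have "satSK T P (e(y := n, x := n)) \<phi> = satSK T P (e(x := n)) \<phi>"
        using allR.hyps(2) by (intro sat_coinc) auto
      ultimately show ?thesis
        using allR.hyps(1) by (simp add: sat_subst)
    qed
    then show False
      using none by simp
  qed
next
  case (exL y x \<phi> \<Gamma> \<Delta>)
  then obtain n where n: "satSK T P (e(x := n)) \<phi>"
    by auto
  have "satSK T P (e(y := n, x := n)) \<phi> = satSK T P (e(x := n)) \<phi>"
    using exL.hyps(2) by (intro sat_coinc) auto
  then have "satSK T P (e(y := n)) (subst \<phi> x (Var y))"
    using exL.hyps(1) n by (simp add: sat_subst)
  moreover have "\<forall>\<chi>\<in>\<Gamma>. satSK T P (e(y := n)) \<chi>"
    using exL.prems exL.hyps(2) by (auto simp: sat_fun_upd_fresh_fvs)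
  ultimately obtain \<psi> where "\<psi> \<in> \<Delta>" "satSK T P (e(y := n)) \<psi>"
    using exL.IH by blast
  then show ?case
    using exL.hyps(2) by (auto simp: sat_fun_upd_fresh_fvs)
next
  case (repl s x \<phi> t \<Gamma> \<Delta>)
  then show ?case
    by (cases "tval e s = tval e t") (auto simp: sat_subst)
next
  case (ind x \<Gamma> \<Delta> \<phi> t)
  show ?case
  proof (rule ccontr)
    assume none: "\<not> (\<exists>\<psi>\<in>insert (subst \<phi> x t) \<Delta>. satSK T P e \<psi>)"
    have step: "satSK T P (e(x := n)) \<phi> \<Longrightarrow> satSK T P (e(x := Suc n)) \<phi>" for n
    proof -
      assume "satSK T P (e(x := n)) \<phi>"
      then have "\<forall>\<chi>\<in>insert \<phi> \<Gamma>. satSK T P (e(x := n)) \<chi>"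
        using ind.prems ind.hyps(1) by (auto simp: sat_fun_upd_fresh_fvs)
      moreover have "\<not> (\<exists>\<psi>\<in>\<Delta>. satSK T P (e(x := n)) \<psi>)"
        using none ind.hyps(1) by (auto simp: sat_fun_upd_fresh_fvs)
      ultimately have "satSK T P (e(x := n)) (subst \<phi> x (Sc (Var x)))"
        using ind.IH by blast
      then show ?thesis
        using ind.hyps(2) by (simp add: sat_subst)
    qed
    have "satSK T P (e(x := n)) \<phi>" for n
    proof (induction n)
      case 0
      then show ?case
        using ind.prems by (simp add: sat_subst freefor_closed del: fun_upd_apply)
    next
      case (Suc n)
      then show ?case
        by (rule step)
    qed
    then show False
      using none ind.hyps(3) by (simp add: sat_subst)
  qed
qed auto

primrec P_clause :: "pinterp \<Rightarrow> pinterp \<Rightarrow> fm \<Rightarrow> bool" where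
  "P_clause T P (Eq s t) = False"
| "P_clause T P (Neq s t) = False"
| "P_clause T P (Tr t) = (tval (\<lambda>_. 0) t \<in> fst P)"
| "P_clause T P (NTr t) = (tval (\<lambda>_. 0) t \<in> fst P)"
| "P_clause T P (Pr t) = False"
| "P_clause T P (NPr t) = False"
| "P_clause T P (And \<psi> \<theta>) =
     (code \<psi> \<in> fst P \<and> code \<theta> \<in> fst P \<or> code \<psi> \<in> fst T \<and> code \<theta> \<in> fst P
      \<or> code \<theta> \<in> fst T \<and> code \<psi> \<in> fst P)"
| "P_clause T P (Or \<psi> \<theta>) =
     (code \<psi> \<in> fst P \<and> code \<theta> \<in> fst P \<or> code \<psi> \<in> snd T \<and> code \<theta> \<in> fst P
      \<or> code \<theta> \<in> snd T \<and> code \<psi> \<in> fst P)"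
| "P_clause T P (All v \<psi>) =
     ((\<exists>n. code (subst \<psi> v (num n)) \<in> fst P) \<and>
      (\<forall>n. code (subst \<psi> v (num n)) \<in> fst P \<or> code (subst \<psi> v (num n)) \<in> fst T))"
| "P_clause T P (Ex v \<psi>) =
     ((\<exists>n. code (subst \<psi> v (num n)) \<in> fst P) \<and>
      (\<forall>n. code (subst \<psi> v (num n)) \<in> fst P \<or> code (subst \<psi> v (num n)) \<in> snd T))"

lemma calP_sat_iff:
  "calP_sat T P \<phi> \<longleftrightarrow> sentence \<phi> \<and> (code \<phi> \<in> Bset \<or> code (neg \<phi>) \<in> Bset \<or> P_clause T P \<phi>)"
  by (cases \<phi>) (auto simp: calP_sat_def)

lemma code_mem_Bset_iff: "code \<phi> \<in> Bset \<longleftrightarrow> base_paradoxical \<phi>"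
  using inj_code by (auto simp: Bset_def inj_eq)

lemma P_clause_mono: "P_clause T P \<phi> \<Longrightarrow> T \<le> T' \<Longrightarrow> P \<le> P' \<Longrightarrow> P_clause T' P' \<phi>"
  by (cases \<phi>) (fastforce simp: less_eq_prod_def)+

lemma calP_sat_mono:
  assumes "calP_sat T P \<phi>" and "T \<le> T'" and "P \<le> P'"
  shows "calP_sat T' P' \<phi>"
  using assms P_clause_mono[OF _ assms(2,3)] unfolding calP_sat_iff by blast

lemma jumpTP_Pair:
  "jumpTP (T, P) =
     ((code ` {\<phi>. sentence \<phi> \<and> modelsSK T P \<phi>}, code ` {\<phi>. sentence \<phi> \<and> modelsSK T P (neg \<phi>)}),
      (code ` {\<phi>. calP_sat T P \<phi>}, code ` {\<phi>. sentence \<phi> \<and> modelsSK T P (Or \<phi> (neg \<phi>))}))"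
  by (auto simp: jumpTP_def calP_sat_iff)

lemma mono_jumpTP: "mono jumpTP"
proof (rule monoI)
  fix S S' :: state
  assume "S \<le> S'"
  then show "jumpTP S \<le> jumpTP S'"
    using sat_mono calP_sat_mono
    by (cases S, cases S') (auto simp: jumpTP_Pair modelsSK_def image_mono Collect_mono)
qed

lemma stage_unfold: "stage a = stage_step stage a"
proof -
  have "stage a = stage_step (cut stage {(x, y). x < y} a) a"
    by (rule def_wfrec[OF eq_reflection[OF stage_def] wf])
  also have "\<dots> = stage_step stage a"
    using GreatestI2_order[of "\<lambda>b. b < a" _ "\<lambda>b. b < a"]
    by (auto simp: stage_step_def cut_apply intro!: image_cong)
  finally show ?thesis .
qed

lemma stage_cases:
  obtains (zero) "\<forall>b. \<not> b < a" "stage a = bot"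
  | (succ) b where "b < a" "\<forall>c<a. c \<le> b" "stage a = jumpTP (stage b)"
  | (limit) "stage a = Sup (stage ` {b. b < a})"
proof (cases "\<exists>b. b < a")
  case False
  moreover have "stage a = bot"
    using False stage_unfold[of a] by (simp add: stage_step_def empty_state_def bot_prod_def)
  ultimately show ?thesis
    using zero by blast
next
  case True
  show ?thesis
  proof (cases "\<exists>b<a. \<forall>c<a. c \<le> b")
    case True
    then obtain b where b: "b < a" "\<forall>c<a. c \<le> b"
      by blast
    then have "(GREATEST b. b < a) = b"
      by (intro Greatest_equality) auto
    then have "stage a = jumpTP (stage b)"
      using True b stage_unfold[of a] by (auto simp: stage_step_def)
    with b show ?thesis
      by (rule succ)
  next
    case False
    then have "stage a = state_Union (stage ` {b. b < a})"
      using \<open>\<exists>b. b < a\<close> stage_unfold[of a] by (auto simp: stage_step_def)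
    also have "\<dots> = Sup (stage ` {b. b < a})"
      by (simp add: state_Union_def Sup_prod_def image_image)
    finally show ?thesis
      by (rule limit)
  qed
qed

lemma stage_mono_and_le_jumpTP:
  "(\<forall>b<a. stage b \<le> stage a) \<and> stage a \<le> jumpTP (stage a)"
proof (induction a rule: less_induct)
  case (less a)
  show ?case
  proof (cases a rule: stage_cases)
    case zero
    then show ?thesis
      by simp
  next
    case (succ b)
    have "stage c \<le> stage b" if "c < a" for c
      using less.IH[OF succ(1)] succ(2) that by (cases "c = b") (auto simp: order.order_iff_strict)
    moreover have "stage b \<le> stage a"
      using less.IH[OF succ(1)] succ(3) by simp
    ultimately show ?thesis
      using succ(3) mono_jumpTP by (auto dest: monoD intro: order_trans)
  next
    case limit
    have below: "stage b \<le> stage a" if "b < a" for b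
      using limit that by (auto intro: Sup_upper)
    moreover have "stage b \<le> jumpTP (stage a)" if "b < a" for b
      using less.IH[OF that] below[OF that] mono_jumpTP by (meson monoD order_trans)
    ultimately show ?thesis
      using limit by (auto intro: Sup_least)
  qed
qed

lemma stage_mono: "b \<le> a \<Longrightarrow> stage b \<le> stage a"
  using stage_mono_and_le_jumpTP[of a] by (cases "b = a") auto

lemma stage_le_jumpTP: "stage a \<le> jumpTP (stage a)"
  using stage_mono_and_le_jumpTP by blast

lemma consistent_antimono: "consistent S' \<Longrightarrow> S \<le> S' \<Longrightarrow> consistent S"
  by (auto simp: consistent_def less_eq_prod_def)

definition P_disjoint_T :: "state \<Rightarrow> bool" where
  "P_disjoint_T S \<longleftrightarrow> fst (snd S) \<inter> (fst (fst S) \<union> snd (fst S)) = {}"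

definition sound :: "state \<Rightarrow> bool" where
  "sound S \<longleftrightarrow> (\<forall>\<phi>. sentence \<phi> \<longrightarrow>
     \<not> modelsSK (fst S) (snd S) (Or \<phi> (neg \<phi>)) \<or> \<not> calP_sat (fst S) (snd S) \<phi>)"

lemma P_disjoint_T_jumpTP_iff: "P_disjoint_T (jumpTP S) \<longleftrightarrow> sound S"
  using inj_code
  by (cases S) (auto simp: P_disjoint_T_def sound_def jumpTP_Pair calP_sat_iff modelsSK_def inj_eq)

lemma le_jumpTP_D:
  assumes "(T, P) \<le> jumpTP (T, P)"
  shows "code \<phi> \<in> fst T \<Longrightarrow> modelsSK T P \<phi>"
    and "code \<phi> \<in> snd T \<Longrightarrow> modelsSK T P (neg \<phi>)"
    and "code \<phi> \<in> fst P \<Longrightarrow> calP_sat T P \<phi>"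
proof -
  have true: "fst T \<subseteq> code ` {\<phi>. sentence \<phi> \<and> modelsSK T P \<phi>}"
    and false: "snd T \<subseteq> code ` {\<phi>. sentence \<phi> \<and> modelsSK T P (neg \<phi>)}"
    and paradoxical: "fst P \<subseteq> code ` {\<phi>. calP_sat T P \<phi>}"
    using assms by (simp_all add: jumpTP_Pair less_eq_prod_def)
  show "code \<phi> \<in> fst T \<Longrightarrow> modelsSK T P \<phi>"
    using true[THEN subsetD, of "code \<phi>"] by (simp add: inj_image_mem_iff[OF inj_code])
  show "code \<phi> \<in> snd T \<Longrightarrow> modelsSK T P (neg \<phi>)"
    using false[THEN subsetD, of "code \<phi>"] by (simp add: inj_image_mem_iff[OF inj_code])
  show "code \<phi> \<in> fst P \<Longrightarrow> calP_sat T P \<phi>"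
    using paradoxical[THEN subsetD, of "code \<phi>"] by (simp add: inj_image_mem_iff[OF inj_code])
qed

lemma base_paradoxical_indeterminate:
  assumes "consistent (T, P)" and "(T, P) \<le> jumpTP (T, P)" and "base_paradoxical \<chi>"
  shows "\<not> modelsSK T P \<chi> \<and> \<not> modelsSK T P (neg \<chi>)"
proof -
  have true_to_false: "PASK {\<chi>} {NTr (quote \<chi>)}" and false_to_true: "PASK {neg \<chi>} {Tr (quote \<chi>)}"
    using assms(3) by (auto simp: base_paradoxical_def PASK_iff_def)
  have "modelsSK T P \<chi> \<Longrightarrow> code \<chi> \<in> snd T"
    using PASK_sound[OF true_to_false assms(1), of "\<lambda>_. 0"] by (simp add: modelsSK_def)
  moreover have "modelsSK T P (neg \<chi>) \<Longrightarrow> code \<chi> \<in> fst T"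
    using PASK_sound[OF false_to_true assms(1), of "\<lambda>_. 0"] by (simp add: modelsSK_def)
  ultimately show ?thesis
    using le_jumpTP_D[OF assms(2), of \<chi>] sat_consistent[OF assms(1), of "\<lambda>_. 0" \<chi>]
    by (auto simp: modelsSK_def)
qed

lemma calP_sat_indeterminate:
  assumes cons: "consistent (T, P)" and le_jump: "(T, P) \<le> jumpTP (T, P)"
    and disj: "P_disjoint_T (T, P)" and "calP_sat T P \<phi>"
  shows "\<not> modelsSK T P \<phi> \<and> \<not> modelsSK T P (neg \<phi>)"
  using assms(4)
proof (induction "size \<phi>" arbitrary: \<phi> rule: less_induct)
  case less
  have P_indet: "\<not> modelsSK T P \<psi> \<and> \<not> modelsSK T P (neg \<psi>)"
    if "code \<psi> \<in> fst P" "size \<psi> < size \<phi>" for \<psi>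
    using less.hyps that le_jumpTP_D(3)[OF le_jump] by blast
  have T_true: "modelsSK T P \<psi>" if "code \<psi> \<in> fst T" for \<psi>
    using that le_jumpTP_D(1)[OF le_jump] by blast
  have T_false: "modelsSK T P (neg \<psi>)" if "code \<psi> \<in> snd T" for \<psi>
    using that le_jumpTP_D(2)[OF le_jump] by blast
  have not_both: "\<not> (modelsSK T P \<psi> \<and> modelsSK T P (neg \<psi>))" for \<psi>
    using sat_consistent[OF cons] by (simp add: modelsSK_def)
  consider "base_paradoxical \<phi>" | "base_paradoxical (neg \<phi>)" | "P_clause T P \<phi>"
    using less.prems by (auto simp: calP_sat_iff code_mem_Bset_iff)
  then show ?case
  proof cases
    case 1
    then show ?thesis
      using base_paradoxical_indeterminate[OF cons le_jump] by blast
  next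
    case 2
    then show ?thesis
      using base_paradoxical_indeterminate[OF cons le_jump] by fastforce
  next
    case 3
    then show ?thesis
    proof (cases \<phi>)
      case (Tr t)
      then show ?thesis
        using 3 disj by (auto simp: P_disjoint_T_def modelsSK_simps)
    next
      case (NTr t)
      then show ?thesis
        using 3 disj by (auto simp: P_disjoint_T_def modelsSK_simps)
    next
      case (And \<psi> \<theta>)
      then show ?thesis
        using 3 P_indet T_true not_both by (auto simp: modelsSK_simps)
    next
      case (Or \<psi> \<theta>)
      then show ?thesis
        using 3 P_indet T_false not_both by (auto simp: modelsSK_simps)
    next
      case (All v \<psi>)
      \<comment> \<open>\<open>size\<close> ignores terms, so numeral instances are smaller than the quantified sentence.\<close>
      then have smaller: "size (subst \<psi> v (num n)) < size \<phi>" for n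
        by simp
      show ?thesis
        using 3 All P_indet[OF _ smaller] T_true not_both by (auto simp: modelsSK_simps neg_subst[symmetric])
    next
      case (Ex v \<psi>)
      then have smaller: "size (subst \<psi> v (num n)) < size \<phi>" for n
        by simp
      show ?thesis
        using 3 Ex P_indet[OF _ smaller] T_false not_both by (auto simp: modelsSK_simps neg_subst[symmetric])
    qed simp_all
  qed
qed

lemma sound_if_le_jumpTP:
  "consistent S \<Longrightarrow> S \<le> jumpTP S \<Longrightarrow> P_disjoint_T S \<Longrightarrow> sound S"
  using calP_sat_indeterminate[of "fst S" "snd S"] by (auto simp: sound_def modelsSK_simps)

lemma P_disjoint_T_stage: "consistent (stage a) \<Longrightarrow> P_disjoint_T (stage a)"
proof (induction a rule: less_induct)
  case (less a)
  show ?case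
  proof (cases a rule: stage_cases)
    case zero
    then show ?thesis
      by (simp add: P_disjoint_T_def)
  next
    case (succ b)
    have "consistent (stage b)"
      using less.prems stage_mono[OF less_imp_le[OF succ(1)]] by (rule consistent_antimono)
    then have "sound (stage b)"
      using less.IH[OF succ(1)] stage_le_jumpTP by (intro sound_if_le_jumpTP)
    then show ?thesis
      using succ(3) P_disjoint_T_jumpTP_iff by simp
  next
    case limit
    have "c \<notin> fst (fst (stage a)) \<union> snd (fst (stage a))" if P_a: "c \<in> fst (snd (stage a))" for c
    proof
      assume "c \<in> fst (fst (stage a)) \<union> snd (fst (stage a))"
      then obtain b' where "b' < a" and in_T: "c \<in> fst (fst (stage b')) \<union> snd (fst (stage b'))"
        unfolding limit by (auto simp: fst_Sup snd_Sup)
      obtain b where "b < a" and in_P: "c \<in> fst (snd (stage b))"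
        using P_a unfolding limit by (auto simp: fst_Sup snd_Sup)
      define m where "m = max b b'"
      have "m < a" and "stage b \<le> stage m" and "stage b' \<le> stage m"
        using \<open>b < a\<close> \<open>b' < a\<close> by (simp_all add: m_def stage_mono)
      moreover have "consistent (stage m)"
        using less.prems stage_mono[OF less_imp_le[OF \<open>m < a\<close>]] by (rule consistent_antimono)
      ultimately have "P_disjoint_T (stage m)"
        using less.IH by simp
      then show False
        using in_T in_P \<open>stage b \<le> stage m\<close> \<open>stage b' \<le> stage m\<close>
        by (auto simp: P_disjoint_T_def less_eq_prod_def)
    qed
    then show ?thesis
      by (auto simp: P_disjoint_T_def)
  qed
qed

theorem mainTheorem7:
  fixes \<alpha> :: "'a::wellorder"
  assumes "consistent (stage \<alpha>)"
  shows "\<forall>\<phi>. sentence \<phi> \<longrightarrow>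
           \<not> modelsSK (fst (stage \<alpha>)) (snd (stage \<alpha>)) (Or \<phi> (neg \<phi>))
         \<or> \<not> calP_sat (fst (stage \<alpha>)) (snd (stage \<alpha>)) \<phi>"
proof -
  have "sound (stage \<alpha>)"
    using assms stage_le_jumpTP P_disjoint_T_stage[OF assms] by (rule sound_if_le_jumpTP)
  then show ?thesis
    unfolding sound_def .
qed

end
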